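(* Let $p\ge1$, $m=2^p$, and inject two identical bosons in input modes $1$ and $2$ of the Sylvester interferometer $U_m=\frac{1}{\sqrt m}H(m)$. Among all $\frac12 m(m+1)$ two-particle output states $(i,j)$ with $1\le i\le j\le m$, the number of suppressed states is $m^2/4$, so the fraction of suppressed states is $\frac{1}{2}\cdot\frac{m}{m+1}$.
   Context: For $m=2^p$, the Sylvester matrix $H(m)$ is defined recursively by $H(1)=[1]$ and $H(2^p)=\begin{bmatrix}H(2^{p-1})&H(2^{p-1})\\ H(2^{p-1})&-H(2^{p-1})\end{bmatrix}$, rows and columns indexed $1,\dots,m$. An $n$-particle state on $m$ modes is a nondecreasing tuple $\vec t=(t_1\le\dots\le t_n)$ with $t_i\in\{1,\dots,m\}$; $\mu_k(\vec t)=|\{i:t_i=k\}|$. For input $\vec s$ and output $\vec t$, the scattering matrix is $S_{i,j}=U_{t_i,s_j}$; the bosonic amplitude is $\mathrm{perm}\,S/\sqrt{\prod_k\mu_k(\vec s)!\prod_k\mu_k(\vec t)!}$. An output state is suppressed if its amplitude is zero. *)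

theory Defs
  imports Complex_Main "HOL-Combinatorics.Permutations"
begin

text \<open>Sylvester matrix H(2^p), entries indexed 1..2^p (recursive block definition).
  Entries outside the index range are irrelevant.\<close>
fun sylvester :: "nat \<Rightarrow> nat \<Rightarrow> nat \<Rightarrow> int" where
  "sylvester 0 i j = 1"
| "sylvester (Suc p) i j =
     (let h = 2 ^ p in
      if i \<le> h \<and> j \<le> h then sylvester p i j
      else if i \<le> h then sylvester p i (j - h)
      else if j \<le> h then sylvester p (i - h) j
      else - sylvester p (i - h) (j - h))"

definition sylv_U :: "nat \<Rightarrow> nat \<Rightarrow> nat \<Rightarrow> real" where
  "sylv_U p i j = real_of_int (sylvester p i j) / sqrt (2 ^ p)"

definition states :: "nat \<Rightarrow> nat \<Rightarrow> nat list set" where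
  "states m n = {t. length t = n \<and> sorted t \<and> set t \<subseteq> {1..m}}"

definition occ :: "nat \<Rightarrow> nat list \<Rightarrow> nat" where
  "occ k t = count_list t k"

definition permanent :: "nat \<Rightarrow> (nat \<Rightarrow> nat \<Rightarrow> real) \<Rightarrow> real" where
  "permanent n A = (\<Sum>\<sigma> | \<sigma> permutes {..<n}. \<Prod>i<n. A i (\<sigma> i))"

definition scattering :: "(nat \<Rightarrow> nat \<Rightarrow> real) \<Rightarrow> nat list \<Rightarrow> nat list \<Rightarrow> nat \<Rightarrow> nat \<Rightarrow> real" where
  "scattering U s t i j = U (t ! i) (s ! j)"

definition amplitude :: "(nat \<Rightarrow> nat \<Rightarrow> real) \<Rightarrow> nat \<Rightarrow> nat list \<Rightarrow> nat list \<Rightarrow> real" where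
  "amplitude U m s t =
     permanent (length t) (scattering U s t) /
     sqrt ((\<Prod>k\<in>{1..m}. fact (occ k s)) * (\<Prod>k\<in>{1..m}. fact (occ k t)))"

definition suppressed :: "(nat \<Rightarrow> nat \<Rightarrow> real) \<Rightarrow> nat \<Rightarrow> nat list \<Rightarrow> nat list \<Rightarrow> bool" where
  "suppressed U m s t \<longleftrightarrow> amplitude U m s t = 0"

end

theory Submission
  imports Defs
begin

text \<open>The first column of a Sylvester matrix is constant and, for m \<ge> 2, the second one alternates
  in sign. Hence for input modes 1 and 2 the scattering matrix of the output (i, j) has rows
  (1, e i) and (1, e j) up to the factor 1/sqrt m, where e k = (-1)^(k+1), so its permanent
  (e i + e j)/m vanishes exactly when i + j is odd. It remains to count the pairs
  1 \<le> i \<le> j \<le> m of opposite parity, which for even m are m^2/4 of the m(m+1)/2 pairs.\<close>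

lemma sylvester_col_1: "sylvester p i 1 = 1"
  by (induction p arbitrary: i) (auto simp: Let_def)

lemma sylvester_col_2:
  assumes "1 \<le> i" "i \<le> 2 ^ Suc p"
  shows "sylvester (Suc p) i 2 = (if odd i then 1 else -1)"
  using assms
proof (induction p arbitrary: i)
  case 0
  then have "i = 1 \<or> i = 2" by auto
  then show ?case using sylvester_col_1 by (auto simp: Let_def)
next
  case (Suc p)
  have two_le: "(2::nat) \<le> 2 ^ Suc p" by simp
  show ?case
  proof (cases "i \<le> 2 ^ Suc p")
    case True
    then show ?thesis using Suc two_le by (simp add: Let_def del: power_Suc)
  next
    case False
    then have "sylvester (Suc (Suc p)) i 2 = sylvester (Suc p) (i - 2 ^ Suc p) 2"
      using two_le by (simp only: sylvester.simps(2) Let_def) simp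
    also have "\<dots> = (if odd (i - 2 ^ Suc p) then 1 else -1)"
      using Suc.prems False by (intro Suc.IH) auto
    finally show ?thesis using False by (simp add: even_diff_nat)
  qed
qed

lemma permanent_2: "permanent 2 A = A 0 0 * A 1 1 + A 0 1 * A 1 0"
proof -
  have "{..<2::nat} = insert 0 (insert 1 {})" by auto
  then show ?thesis
    unfolding permanent_def
    by (simp add: sum_over_permutations_insert lessThan_nat_numeral transpose_def)
qed

lemma suppressed_sylvester_iff_odd_sum:
  assumes "1 \<le> i" "i \<le> j" "j \<le> 2 ^ Suc p"
  shows "suppressed (sylv_U (Suc p)) m [1, 2] [i, j] \<longleftrightarrow> odd (i + j)"
proof -
  define r where "r = sqrt (2 ^ Suc p :: real)"
  define \<epsilon> where "\<epsilon> k = (if odd k then 1 else -1 :: real)" for k :: nat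
  have "r > 0" by (simp add: r_def)
  have U_col_1: "sylv_U (Suc p) k 1 = 1 / r" for k
    using sylvester_col_1[of "Suc p" k] by (simp add: sylv_U_def r_def)
  have U_col_2: "sylv_U (Suc p) k 2 = \<epsilon> k / r" if "1 \<le> k" "k \<le> 2 ^ Suc p" for k
    using sylvester_col_2[OF that] by (simp add: sylv_U_def r_def \<epsilon>_def del: power_Suc sylvester.simps)
  have "permanent (length [i, j]) (scattering (sylv_U (Suc p)) [1, 2] [i, j])
      = sylv_U (Suc p) i 1 * sylv_U (Suc p) j 2 + sylv_U (Suc p) i 2 * sylv_U (Suc p) j 1"
    using permanent_2[of "scattering (sylv_U (Suc p)) [1, 2] [i, j]"]
    by (simp add: scattering_def numeral_2_eq_2)
  also have "\<dots> = (\<epsilon> i + \<epsilon> j) / (r * r)"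
    using assms U_col_1[of i] U_col_1[of j] U_col_2[of i] U_col_2[of j]
    by (simp add: add_divide_distrib)
  finally have perm: "permanent (length [i, j]) (scattering (sylv_U (Suc p)) [1, 2] [i, j])
      = (\<epsilon> i + \<epsilon> j) / (r * r)" .
  have "sqrt ((\<Prod>k\<in>{1..m}. fact (occ k [1, 2])) * (\<Prod>k\<in>{1..m}. fact (occ k [i, j]))) \<noteq> (0::real)"
    by (simp add: prod_pos less_imp_neq[symmetric])
  then have "suppressed (sylv_U (Suc p)) m [1, 2] [i, j] \<longleftrightarrow> \<epsilon> i + \<epsilon> j = 0"
    unfolding suppressed_def amplitude_def perm using \<open>r > 0\<close> by simp
  also have "\<dots> \<longleftrightarrow> odd (i + j)" by (auto simp: \<epsilon>_def)
  finally show ?thesis .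
qed

definition sorted_pairs :: "nat \<Rightarrow> (nat \<Rightarrow> nat \<Rightarrow> bool) \<Rightarrow> (nat \<times> nat) set" where
  "sorted_pairs n P = {(i, j). 1 \<le> i \<and> i \<le> j \<and> j \<le> n \<and> P i j}"

lemma sorted_pairs_0: "sorted_pairs 0 P = {}"
  by (auto simp: sorted_pairs_def)

lemma finite_sorted_pairs: "finite (sorted_pairs n P)"
  by (rule finite_subset[of _ "{1..n} \<times> {1..n}"]) (auto simp: sorted_pairs_def)

lemma card_sorted_pairs_Suc:
  "card (sorted_pairs (Suc n) P) = card (sorted_pairs n P) + card {i \<in> {1..Suc n}. P i (Suc n)}"
proof -
  have "sorted_pairs (Suc n) P = sorted_pairs n P \<union> (\<lambda>i. (i, Suc n)) ` {i \<in> {1..Suc n}. P i (Suc n)}"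
    by (auto simp: sorted_pairs_def le_Suc_eq)
  moreover have "card ((\<lambda>i. (i, Suc n)) ` {i \<in> {1..Suc n}. P i (Suc n)}) = card {i \<in> {1..Suc n}. P i (Suc n)}"
    by (rule card_image) (auto simp: inj_on_def)
  moreover have "sorted_pairs n P \<inter> (\<lambda>i. (i, Suc n)) ` {i \<in> {1..Suc n}. P i (Suc n)} = {}"
    by (auto simp: sorted_pairs_def)
  ultimately show ?thesis
    by (simp add: card_Un_disjoint finite_sorted_pairs)
qed

lemma card_sorted_pairs: "card (sorted_pairs n (\<lambda>_ _. True)) = n * (n + 1) div 2"
proof (induction n)
  case (Suc n)
  then show ?case
    using card_sorted_pairs_Suc[of n "\<lambda>_ _. True"] by (simp del: atLeastAtMost_iff)
qed (simp add: sorted_pairs_0)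

lemma card_filter_atLeastAtMost_Suc:
  "card {i \<in> {1..Suc n}. P i} = card {i \<in> {1..n}. P i} + (if P (Suc n) then 1 else 0)"
proof -
  have "{i \<in> {1..Suc n}. P i}
      = (if P (Suc n) then insert (Suc n) {i \<in> {1..n}. P i} else {i \<in> {1..n}. P i})"
    by (auto simp: le_Suc_eq)
  then show ?thesis by auto
qed

lemma card_even_atLeastAtMost: "card {i \<in> {1..n}. even i} = n div 2"
proof (induction n)
  case (Suc n)
  then show ?case using card_filter_atLeastAtMost_Suc[of n even] by simp
qed simp

lemma card_odd_atLeastAtMost: "card {i \<in> {1..n}. odd i} = (n + 1) div 2"
proof (induction n)
  case (Suc n)
  then show ?case using card_filter_atLeastAtMost_Suc[of n odd] by simp
qed simp

lemma card_sorted_pairs_odd_sum: "card (sorted_pairs n (\<lambda>i j. odd (i + j))) = n\<^sup>2 div 4"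
proof (induction n)
  case 0
  then show ?case by (simp add: sorted_pairs_0)
next
  case (Suc n)
  have "card (sorted_pairs (Suc n) (\<lambda>i j. odd (i + j)))
      = n\<^sup>2 div 4 + card {i \<in> {1..Suc n}. odd (i + Suc n)}"
    by (simp only: card_sorted_pairs_Suc Suc.IH)
  also have "\<dots> = (Suc n)\<^sup>2 div 4"
  proof (cases "even n")
    case True
    then have "{i \<in> {1..Suc n}. odd (i + Suc n)} = {i \<in> {1..Suc n}. even i}" by auto
    then have "card {i \<in> {1..Suc n}. odd (i + Suc n)} = Suc n div 2"
      by (simp only: card_even_atLeastAtMost)
    then show ?thesis
      using True by (auto elim!: evenE simp: power2_eq_square algebra_simps)
  next
    case False
    then have "{i \<in> {1..Suc n}. odd (i + Suc n)} = {i \<in> {1..Suc n}. odd i}" by auto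
    then have "card {i \<in> {1..Suc n}. odd (i + Suc n)} = (Suc n + 1) div 2"
      by (simp only: card_odd_atLeastAtMost)
    then show ?thesis
      using False by (auto elim!: oddE simp: power2_eq_square algebra_simps)
  qed
  finally show ?case .
qed

lemma states_2_eq: "states m 2 = (\<lambda>(i, j). [i, j]) ` sorted_pairs m (\<lambda>_ _. True)"
proof safe
  fix t assume "t \<in> states m 2"
  then have t: "length t = 2" "sorted t" "set t \<subseteq> {1..m}" by (auto simp: states_def)
  then obtain a b where "t = [a, b]"
    by (metis length_0_conv length_Suc_conv numeral_2_eq_2)
  then show "t \<in> (\<lambda>(i, j). [i, j]) ` sorted_pairs m (\<lambda>_ _. True)"
    using t by (auto simp: sorted_pairs_def image_iff)
qed (auto simp: sorted_pairs_def states_def)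

lemma inj_on_pair_to_list: "inj_on (\<lambda>(i, j). [i :: nat, j]) A"
  by (auto simp: inj_on_def)

theorem corollary1:
  fixes p m :: nat
  assumes "p \<ge> 1" and "m = 2 ^ p"
  shows "card (states m 2) = m * (m + 1) div 2 \<and>
           card {t \<in> states m 2. suppressed (sylv_U p) m [1, 2] t} = m ^ 2 div 4 \<and>
           real (card {t \<in> states m 2. suppressed (sylv_U p) m [1, 2] t}) / real (card (states m 2))
           = 1 / 2 * (real m / (real m + 1))"
proof -
  obtain q where q: "p = Suc q" using assms(1) by (cases p) auto
  have total: "card (states m 2) = m * (m + 1) div 2"
    by (simp add: states_2_eq card_image[OF inj_on_pair_to_list] card_sorted_pairs)
  have "{t \<in> states m 2. suppressed (sylv_U p) m [1, 2] t}
      = (\<lambda>(i, j). [i, j]) ` sorted_pairs m (\<lambda>i j. odd (i + j))"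
    using suppressed_sylvester_iff_odd_sum assms(2) q
    by (auto simp: states_2_eq sorted_pairs_def image_iff)
  then have supp: "card {t \<in> states m 2. suppressed (sylv_U p) m [1, 2] t} = m\<^sup>2 div 4"
    by (simp only: card_image[OF inj_on_pair_to_list] card_sorted_pairs_odd_sum)
  obtain k where k: "m = 2 * k" "k \<ge> 1" using assms q by auto
  have "m\<^sup>2 div 4 = k * k" "m * (m + 1) div 2 = k * (2 * k + 1)"
    using k by (simp_all add: power2_eq_square algebra_simps)
  moreover have "real (k * k) / real (k * (2 * k + 1)) = real k / real (2 * k + 1)"
    unfolding of_nat_mult using k(2) by (intro nonzero_mult_divide_mult_cancel_left) simp
  moreover have "real k / real (2 * k + 1) = 1 / 2 * (real m / (real m + 1))"
    using k(1) by simp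
  ultimately show ?thesis using total supp by simp
qed

end
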